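(* Let $(X,|\cdot|)$ be a Euclidean plane and $\|\cdot\|$ a norm on $X$ with $\|\cdot\|\le|\cdot|$. Let $E$ be the unit ball of $|\cdot|$ and $B$ the unit ball of $\|\cdot\|$. Then $E$ is the John ellipse of $B$ if and only if there exist $v_0,v_1,v_2\in X$ with $|v_i|=\|v_i\|=1$ for $i=0,1,2$ and $\langle v_i,v_{i+1}\rangle\ge0$ for $i=0,1,2$, where $v_3:=-v_0$.
   Context: For a compact convex centrally symmetric set $B\subset\mathbb{R}^2$ with the origin in its interior, the John ellipse of $B$ is the unique ellipse of maximal area contained in $B$. $\langle\cdot,\cdot\rangle$ is the inner product inducing $|\cdot|$. *)

theory Defs
  imports "HOL-Analysis.Analysis"
begin

definition is_norm :: "('a::real_vector \<Rightarrow> real) \<Rightarrow> bool" where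
  "is_norm N \<longleftrightarrow>
     (\<forall>x. 0 \<le> N x) \<and> (\<forall>x. N x = 0 \<longleftrightarrow> x = 0) \<and>
     (\<forall>a x. N (a *\<^sub>R x) = \<bar>a\<bar> * N x) \<and>
     (\<forall>x y. N (x + y) \<le> N x + N y)"

definition is_ellipse :: "'a::euclidean_space set \<Rightarrow> bool" where
  "is_ellipse F \<longleftrightarrow>
     (\<exists>c f. linear f \<and> inj f \<and> F = (\<lambda>x. c + f x) ` cball (0::'a) 1)"

text \<open>E is the John ellipse of B: an ellipse contained in B of maximal area among
  all ellipses contained in B (the maximiser is unique by John's theorem).\<close>
definition is_john_ellipse :: "'a::euclidean_space set \<Rightarrow> 'a set \<Rightarrow> bool" where
  "is_john_ellipse B E \<longleftrightarrow>
     is_ellipse E \<and> E \<subseteq> B \<and>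
     (\<forall>F. is_ellipse F \<and> F \<subseteq> B \<longrightarrow> measure lebesgue F \<le> measure lebesgue E)"

end

theory Submission
  imports Defs
begin

text \<open>Identify the plane with \<open>\<complex>\<close> and let \<open>\<sigma>(u) = u\<^sup>2\<close> (\<open>complex_square\<close>), so that \<open>\<sigma>\<close> doubles
  angles and \<open>\<sigma>(-u) = \<sigma>(u)\<close>. For a linear map \<open>A\<close> the function \<open>u \<mapsto> |A u|\<^sup>2\<close> on the unit circle is
  an affine function of \<open>\<sigma>(u)\<close> with constant term \<open>tr (A\<^sup>T A) / 2 \<ge> |det A|\<close>. The unit disc is
  therefore the John ellipse of \<open>B\<close> as soon as \<open>0\<close> lies in the convex hull of \<open>\<sigma>(C)\<close>, \<open>C\<close> the set
  of contact points: every inscribed ellipse \<open>c + f(E)\<close> satisfies \<open>|f\<^sup>T v| \<le> 1\<close> for \<open>v \<in> C\<close>, whence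
  \<open>|det f| \<le> 1\<close>. Conversely, if \<open>0\<close> is separated from \<open>\<sigma>(C)\<close> by a direction \<open>z\<close>, then \<open>\<parallel>\<cdot>\<parallel>\<close> is
  uniformly smaller than \<open>|\<cdot>|\<close> on the directions \<open>u\<close> with \<open>\<sigma>(u) \<bullet> z\<close> small, and shrinking the disc
  slightly along the contact directions while stretching it across gives an inscribed ellipse of
  larger area. Finally, by Caratheodory \<open>0 \<in> conv \<sigma>(C)\<close> involves at most three contact points,
  and after replacing some of them by their negatives this is exactly the condition that
  \<open>v\<^sub>0, v\<^sub>1, v\<^sub>2, -v\<^sub>0\<close> follow each other at angles of at most \<open>\<pi>/2\<close>.\<close>

definition contact_points :: "('a::real_normed_vector \<Rightarrow> real) \<Rightarrow> 'a set" where
  "contact_points N = {v. norm v = 1 \<and> N v = 1}"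

definition contact_triple :: "('a::real_inner \<Rightarrow> real) \<Rightarrow> bool" where
  "contact_triple N \<longleftrightarrow> (\<exists>v0 \<in> contact_points N. \<exists>v1 \<in> contact_points N. \<exists>v2 \<in> contact_points N.
     v0 \<bullet> v1 \<ge> 0 \<and> v1 \<bullet> v2 \<ge> 0 \<and> v2 \<bullet> (- v0) \<ge> 0)"

section \<open>Norms and contact points\<close>

lemma is_norm_nonneg: "is_norm N \<Longrightarrow> 0 \<le> N x"
  unfolding is_norm_def by blast

lemma is_norm_eq_0_iff: "is_norm N \<Longrightarrow> N x = 0 \<longleftrightarrow> x = 0"
  unfolding is_norm_def by blast

lemma is_norm_scaleR: "is_norm N \<Longrightarrow> N (a *\<^sub>R x) = \<bar>a\<bar> * N x"
  unfolding is_norm_def by blast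

lemma is_norm_triangle: "is_norm N \<Longrightarrow> N (x + y) \<le> N x + N y"
  unfolding is_norm_def by blast

lemma is_norm_minus: "is_norm N \<Longrightarrow> N (- x) = N x"
  using is_norm_scaleR[of N "-1" x] by simp

lemma is_norm_comp_linear:
  assumes "is_norm N" "linear h" "inj h"
  shows "is_norm (N \<circ> h)"
  using assms unfolding is_norm_def
  by (auto simp: linear_add linear_scale linear_0 inj_eq[of h _ 0, symmetric])

lemma continuous_on_is_norm:
  assumes N: "is_norm N" and le: "\<And>x. N x \<le> norm x"
  shows "continuous_on S N"
proof (rule lipschitz_on_continuous_on)
  have "N x \<le> N y + dist x y" for x y
    using is_norm_triangle[OF N, of "x - y" y] le[of "x - y"] by (simp add: dist_norm)
  then show "1-lipschitz_on S N"
    by (intro lipschitz_onI) (simp_all add: dist_real_def abs_le_iff, metis add.commute diff_le_eq dist_commute)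
qed

lemma contact_points_uminus:
  "is_norm N \<Longrightarrow> v \<in> contact_points N \<Longrightarrow> - v \<in> contact_points N"
  by (simp add: contact_points_def is_norm_minus)

lemma compact_contact_points:
  fixes N :: "'a::euclidean_space \<Rightarrow> real"
  assumes "is_norm N" "\<And>x. N x \<le> norm x"
  shows "compact (contact_points N)"
proof (rule compact_eq_bounded_closed[THEN iffD2], rule conjI)
  show "bounded (contact_points N)" by (auto simp: contact_points_def bounded_iff)
  have "continuous_on UNIV N" by (rule continuous_on_is_norm[OF assms])
  then show "closed (contact_points N)"
    unfolding contact_points_def Collect_conj_eq
    by (intro closed_Int closed_Collect_eq continuous_intros) auto
qed

lemma contact_point_supports:
  fixes v y :: "'a::real_inner"
  assumes N: "is_norm N" and le: "\<And>x. N x \<le> norm x" and v: "v \<in> contact_points N"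
  shows "v \<bullet> y \<le> N y"
proof (rule ccontr)
  assume "\<not> v \<bullet> y \<le> N y"
  then have d: "0 < v \<bullet> y - N y" by simp
  have v1: "norm v = 1" "N v = 1" using v by (auto simp: contact_points_def)
  have first_order: "2 * (v \<bullet> y - N y) \<le> t * (norm y)\<^sup>2" if t: "0 < t" "t * N y \<le> 1" for t
  proof -
    have "1 - t * N y \<le> N (v - t *\<^sub>R y)"
      using is_norm_triangle[OF N, of "v - t *\<^sub>R y" "t *\<^sub>R y"] is_norm_scaleR[OF N, of t y] v1 t
      by simp
    also have "\<dots> \<le> norm (v - t *\<^sub>R y)" by (rule le)
    finally have "(1 - t * N y)\<^sup>2 \<le> (norm (v - t *\<^sub>R y))\<^sup>2"
      using t by (intro power_mono) auto
    also have "\<dots> = (v - t *\<^sub>R y) \<bullet> (v - t *\<^sub>R y)" by (rule power2_norm_eq_inner)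
    also have "\<dots> = v \<bullet> v - 2 * t * (v \<bullet> y) + t\<^sup>2 * (y \<bullet> y)"
      by (simp add: inner_diff_left inner_diff_right inner_commute power2_eq_square algebra_simps)
    also have "\<dots> = 1 - 2 * t * (v \<bullet> y) + t\<^sup>2 * (norm y)\<^sup>2"
      using v1 by (simp add: dot_square_norm)
    finally have "t * (2 * (v \<bullet> y - N y)) \<le> t * (t * ((norm y)\<^sup>2 - (N y)\<^sup>2))"
      by (simp add: power2_eq_square algebra_simps)
    then have "2 * (v \<bullet> y - N y) \<le> t * ((norm y)\<^sup>2 - (N y)\<^sup>2)" using t by simp
    also have "\<dots> \<le> t * (norm y)\<^sup>2" using t by (simp add: right_diff_distrib)
    finally show ?thesis .
  qed
  define t where "t = min (1 / (N y + 1)) ((v \<bullet> y - N y) / ((norm y)\<^sup>2 + 1))"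
  have Ny: "0 \<le> N y" by (rule is_norm_nonneg[OF N])
  have t0: "0 < t" using d Ny by (auto simp: t_def intro!: divide_pos_pos add_nonneg_pos)
  have "t * N y \<le> 1 / (N y + 1) * N y" using Ny by (intro mult_right_mono) (auto simp: t_def)
  also have "\<dots> \<le> 1" using Ny by (simp add: field_simps)
  finally have "2 * (v \<bullet> y - N y) \<le> t * (norm y)\<^sup>2" using first_order t0 by blast
  also have "\<dots> \<le> (v \<bullet> y - N y) / ((norm y)\<^sup>2 + 1) * (norm y)\<^sup>2"
    by (intro mult_right_mono) (auto simp: t_def)
  also have "\<dots> = (v \<bullet> y - N y) * ((norm y)\<^sup>2 / ((norm y)\<^sup>2 + 1))" by simp
  also have "\<dots> < (v \<bullet> y - N y) * 1"
    using d by (intro mult_strict_left_mono) (simp_all add: add_nonneg_pos)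
  finally show False using d by simp
qed

section \<open>Ellipses\<close>

lemma compact_ellipse:
  assumes "is_ellipse (F :: 'a::euclidean_space set)"
  shows "compact F"
proof -
  obtain c f where f: "linear f" and F: "F = (\<lambda>x. c + f x) ` cball (0::'a) 1"
    using assms unfolding is_ellipse_def by blast
  have "continuous_on UNIV (\<lambda>x. c + f x)"
    using f by (intro continuous_intros) (simp add: linear_continuous_on linear_conv_bounded_linear)
  then show ?thesis
    unfolding F by (intro compact_continuous_image) (auto intro: continuous_on_subset)
qed

lemma measure_ellipse:
  fixes f :: "real^'n::{finite,wellorder} \<Rightarrow> real^'n::_" and c :: "real^'n::_"
  assumes "linear f"
  shows "measure lebesgue ((\<lambda>x. c + f x) ` cball 0 1) = \<bar>det (matrix f)\<bar> * measure lebesgue (cball (0::real^'n::_) 1)"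
proof -
  have "(\<lambda>x. c + f x) ` cball 0 1 = (+) c ` (f ` cball 0 1)" by (auto simp: image_image)
  then show ?thesis
    by (simp add: measure_translation measure_linear_image[OF assms lmeasurable_cball])
qed

lemma is_john_ellipse_cball_iff:
  fixes B :: "'a::euclidean_space set"
  assumes "cball 0 1 \<subseteq> B"
  shows "is_john_ellipse B (cball 0 1) \<longleftrightarrow>
    (\<forall>F. is_ellipse F \<and> F \<subseteq> B \<longrightarrow> measure lebesgue F \<le> measure lebesgue (cball (0::'a) 1))"
proof -
  have "is_ellipse (cball (0::'a) 1)"
    unfolding is_ellipse_def by (intro exI[of _ 0] exI[of _ id]) (auto simp: linear_id)
  with assms show ?thesis unfolding is_john_ellipse_def by blast
qed

lemma cball_subset_unit_ball: "(\<And>x. N x \<le> norm x) \<Longrightarrow> cball 0 1 \<subseteq> {x. N x \<le> 1}"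
  by (metis mem_Collect_eq mem_cball_0 order_trans subsetI)

lemma inscribed_ellipse_centred:
  assumes N: "is_norm N" and f: "linear f"
    and sub: "(\<lambda>x. c + f x) ` cball 0 1 \<subseteq> {x. N x \<le> 1}" and x: "norm x \<le> 1"
  shows "N (f x) \<le> 1"
proof -
  have "c + f x \<in> (\<lambda>x. c + f x) ` cball 0 1" "c + f (- x) \<in> (\<lambda>x. c + f x) ` cball 0 1"
    using x by auto
  then have bounds: "N (c + f x) \<le> 1" "N (c + f (- x)) \<le> 1" using sub by auto
  have eq: "2 *\<^sub>R f x = (c + f x) + - (c + f (- x))"
    by (simp add: linear_neg[OF f] scaleR_2)
  have "2 * N (f x) = N (2 *\<^sub>R f x)" using is_norm_scaleR[OF N, of 2] by simp
  also have "\<dots> = N ((c + f x) + - (c + f (- x)))" by (simp only: eq)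
  also have "\<dots> \<le> N (c + f x) + N (- (c + f (- x)))" by (rule is_norm_triangle[OF N])
  also have "\<dots> = N (c + f x) + N (c + f (- x))" by (simp only: is_norm_minus[OF N])
  finally show ?thesis using bounds by simp
qed

lemma is_ellipse_isometric_image:
  fixes g :: "'a::euclidean_space \<Rightarrow> 'b::euclidean_space"
  assumes g: "linear g" and h: "linear h" and hg: "\<And>x. h (g x) = x" and gh: "\<And>y. g (h y) = y"
    and norm_h: "\<And>y. norm (h y) = norm y" and F: "is_ellipse F"
  shows "is_ellipse (g ` F)"
proof -
  obtain c f where f: "linear f" "inj f" and Fe: "F = (\<lambda>x. c + f x) ` cball (0::'a) 1"
    using F unfolding is_ellipse_def by blast
  have inj: "inj g" "inj h" by (metis hg injI) (metis gh injI)
  have "cball (0::'a) 1 = h ` cball 0 1"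
    using norm_h gh by (auto intro!: image_eqI[where x = "g x" for x] simp: hg) (metis hg)
  then have "g ` F = (\<lambda>y. g c + (g \<circ> f \<circ> h) y) ` cball 0 1"
    unfolding Fe by (auto simp: image_image linear_add[OF g])
  moreover have "linear (g \<circ> f \<circ> h)" using g f(1) h by (simp add: linear_compose)
  moreover have "inj (g \<circ> f \<circ> h)" using f(2) inj by (intro inj_compose)
  ultimately show ?thesis unfolding is_ellipse_def by blast
qed

lemma is_john_ellipse_isometric_image:
  fixes g :: "'a::euclidean_space \<Rightarrow> 'b::euclidean_space"
  assumes g: "linear g" and h: "linear h" and hg: "\<And>x. h (g x) = x" and gh: "\<And>y. g (h y) = y"
    and norm_g: "\<And>x. norm (g x) = norm x"
    and meas: "\<And>K. compact K \<Longrightarrow> measure lebesgue (g ` K) = measure lebesgue K"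
  shows "is_john_ellipse (g ` B) (g ` E) \<longleftrightarrow> is_john_ellipse B E"
proof -
  have norm_h: "norm (h y) = norm y" for y using norm_g[of "h y"] gh by simp
  have image_inverse: "h ` g ` S = S" "g ` h ` T = T" for S T by (simp_all add: image_image hg gh)
  have ellipse: "is_ellipse (g ` F) \<longleftrightarrow> is_ellipse F" for F
    using is_ellipse_isometric_image[OF g h hg gh norm_h, of F]
      is_ellipse_isometric_image[OF h g gh hg norm_g, of "g ` F"]
    by (auto simp: image_inverse)
  have subset: "g ` S \<subseteq> g ` T \<longleftrightarrow> S \<subseteq> T" for S T
    by (rule inj_image_subset_iff) (metis hg injI)
  have measure_eq: "measure lebesgue (g ` F) = measure lebesgue F" if "is_ellipse F" for F
    using meas compact_ellipse that by blast
  show ?thesis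
    unfolding is_john_ellipse_def ellipse subset
  proof (intro conj_cong refl iffI allI impI)
    fix F assume "is_ellipse E"
      and max: "\<forall>F. is_ellipse F \<and> F \<subseteq> g ` B \<longrightarrow> measure lebesgue F \<le> measure lebesgue (g ` E)"
      and F: "is_ellipse F \<and> F \<subseteq> B"
    then show "measure lebesgue F \<le> measure lebesgue E"
      using max[rule_format, of "g ` F"] by (simp add: ellipse subset measure_eq)
  next
    fix F assume "is_ellipse E"
      and max: "\<forall>F. is_ellipse F \<and> F \<subseteq> B \<longrightarrow> measure lebesgue F \<le> measure lebesgue E"
      and F: "is_ellipse F \<and> F \<subseteq> g ` B"
    then have "is_ellipse (h ` F)" "h ` F \<subseteq> B"
      using ellipse[of "h ` F"] subset[of "h ` F" B] by (simp_all add: image_inverse)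
    then show "measure lebesgue F \<le> measure lebesgue (g ` E)"
      using max measure_eq[of "h ` F"] measure_eq[OF \<open>is_ellipse E\<close>] by (simp add: image_inverse)
  qed
qed

section \<open>The squaring map of the plane\<close>

lemma inner_real2: "(x::real^2) \<bullet> y = x$1 * y$1 + x$2 * y$2"
  by (simp add: inner_vec_def sum_2)

lemma norm_real2_sq: "(norm (x::real^2))\<^sup>2 = (x$1)\<^sup>2 + (x$2)\<^sup>2"
  unfolding power2_norm_eq_inner inner_real2 by (simp add: power2_eq_square)

definition cross2 :: "real^2 \<Rightarrow> real^2 \<Rightarrow> real" where
  "cross2 x y = x$1 * y$2 - x$2 * y$1"

lemma inner_via_unit_real2:
  assumes "norm x = 1"
  shows "y \<bullet> w = (x \<bullet> y) * (x \<bullet> w) + cross2 x y * cross2 x w"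
proof -
  have "(x \<bullet> y) * (x \<bullet> w) + cross2 x y * cross2 x w = (norm x)\<^sup>2 * (y \<bullet> w)"
    unfolding norm_real2_sq inner_real2 cross2_def by (simp add: power2_eq_square algebra_simps)
  then show ?thesis using assms by simp
qed

lemma cross2_via_unit_real2:
  assumes "norm x = 1"
  shows "cross2 y w = (x \<bullet> y) * cross2 x w - cross2 x y * (x \<bullet> w)"
proof -
  have "(x \<bullet> y) * cross2 x w - cross2 x y * (x \<bullet> w) = (norm x)\<^sup>2 * cross2 y w"
    unfolding norm_real2_sq inner_real2 cross2_def by (simp add: power2_eq_square algebra_simps)
  then show ?thesis using assms by simp
qed

definition complex_square :: "real^2 \<Rightarrow> real^2" where
  "complex_square x = (\<chi> i. if i = 1 then (x$1)\<^sup>2 - (x$2)\<^sup>2 else 2 * x$1 * x$2)"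

lemma complex_square_nth [simp]:
  "complex_square x $ 1 = (x$1)\<^sup>2 - (x$2)\<^sup>2"
  "complex_square x $ 2 = 2 * x$1 * x$2"
  by (simp_all add: complex_square_def)

lemma inner_complex_square:
  "complex_square x \<bullet> complex_square y = 2 * (x \<bullet> y)\<^sup>2 - (norm x)\<^sup>2 * (norm y)\<^sup>2"
  unfolding inner_real2 norm_real2_sq by (simp add: power2_eq_square algebra_simps)

lemma complex_square_scaleR [simp]: "complex_square (a *\<^sub>R x) = a\<^sup>2 *\<^sub>R complex_square x"
  by (simp add: vec_eq_iff forall_2 power2_eq_square algebra_simps)

lemma complex_square_uminus [simp]: "complex_square (- x) = complex_square x"
  using complex_square_scaleR[of "-1" x] by simp

lemma norm_complex_square: "norm (complex_square x) = (norm x)\<^sup>2"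
proof (rule power2_eq_imp_eq)
  show "(norm (complex_square x))\<^sup>2 = ((norm x)\<^sup>2)\<^sup>2"
    unfolding norm_real2_sq by (simp add: power2_eq_square algebra_simps)
qed simp_all

lemma continuous_on_complex_square: "continuous_on S complex_square"
  unfolding complex_square_def
proof (rule continuous_on_vec_lambda)
  fix i :: 2
  show "continuous_on S (\<lambda>x. if i = 1 then (x$1)\<^sup>2 - (x$2)\<^sup>2 else 2 * x$1 * x$2)"
    by (cases "i = 1") (auto intro!: continuous_intros)
qed

section \<open>Contact triples and the convex hull of squared contact points\<close>

lemma complex_square_cyclic_combination:
  "(cross2 v1 v2 * (v1 \<bullet> v2)) *\<^sub>R complex_square v0 + (cross2 v2 v0 * (v2 \<bullet> v0)) *\<^sub>R complex_square v1
     + (cross2 v0 v1 * (v0 \<bullet> v1)) *\<^sub>R complex_square v2 = 0"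
  by (simp add: vec_eq_iff forall_2 inner_real2 cross2_def power2_eq_square algebra_simps)

lemma complex_square_orthogonal:
  assumes "norm u = norm w" "u \<bullet> w = 0"
  shows "complex_square w = - complex_square u"
proof -
  let ?s = "complex_square u + complex_square w"
  have "(norm ?s)\<^sup>2 = complex_square u \<bullet> complex_square u + 2 * (complex_square u \<bullet> complex_square w)
      + complex_square w \<bullet> complex_square w"
    by (simp add: power2_norm_eq_inner inner_add_left inner_add_right inner_commute)
  also have "\<dots> = 0"
    using assms by (simp add: inner_complex_square dot_square_norm norm_complex_square)
  finally show ?thesis by (simp add: eq_neg_iff_add_eq_0 add.commute)
qed

lemma zero_in_convex_hull_3:
  fixes x y z :: "'a::real_vector"
  assumes ab: "0 < a * b" and ac: "0 < a * c" and sum: "a *\<^sub>R x + b *\<^sub>R y + c *\<^sub>R z = 0"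
  shows "0 \<in> convex hull {x, y, z}"
proof -
  have pos: "0 \<in> convex hull {x, y, z}"
    if "0 < a" "0 < b" "0 < c" "a *\<^sub>R x + b *\<^sub>R y + c *\<^sub>R z = 0" for a b c
  proof -
    define s where "s = a + b + c"
    have s: "0 < s" using that by (simp add: s_def)
    have "(a / s) *\<^sub>R x + (b / s) *\<^sub>R y + (c / s) *\<^sub>R z = (1 / s) *\<^sub>R (a *\<^sub>R x + b *\<^sub>R y + c *\<^sub>R z)"
      by (simp add: scaleR_add_right)
    also have "\<dots> = 0" using that by simp
    finally have "0 = (a / s) *\<^sub>R x + (b / s) *\<^sub>R y + (c / s) *\<^sub>R z" ..
    moreover have "a / s + b / s + c / s = 1" using s by (simp add: s_def add_divide_distrib[symmetric])
    ultimately show ?thesis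
      using that s unfolding convex_hull_3 by fastforce
  qed
  show ?thesis
  proof (cases "0 < a")
    case True
    then show ?thesis using pos[of a b c] ab ac sum by (simp add: zero_less_mult_iff)
  next
    case False
    moreover have "(- a) *\<^sub>R x + (- b) *\<^sub>R y + (- c) *\<^sub>R z = 0"
      using sum by (metis minus_add_distrib neg_equal_0_iff_equal scaleR_minus_left)
    ultimately show ?thesis using pos[of "- a" "- b" "- c"] ab ac by (simp add: zero_less_mult_iff)
  qed
qed

lemma zero_in_hull_complex_square_of_orthogonal:
  assumes "norm u = norm w" "u \<bullet> w = 0"
  shows "0 \<in> convex hull {complex_square u, complex_square w, complex_square v}"
proof -
  have "0 = (1/2) *\<^sub>R complex_square u + (1/2) *\<^sub>R complex_square w + 0 *\<^sub>R complex_square v"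
    using complex_square_orthogonal[OF assms] by simp
  then show ?thesis
    unfolding convex_hull_3 by (intro CollectI exI[of _ "1/2"] exI[of _ "0::real"]) auto
qed

lemma cyclic_weights_same_sign:
  assumes unit: "norm v0 = 1"
    and pos: "0 < v0 \<bullet> v1" "0 < v1 \<bullet> v2" and neg: "v2 \<bullet> v0 < 0"
  defines "a \<equiv> cross2 v1 v2 * (v1 \<bullet> v2)" and "b \<equiv> cross2 v2 v0 * (v2 \<bullet> v0)"
    and "c \<equiv> cross2 v0 v1 * (v0 \<bullet> v1)"
  shows "0 < a * b" "0 < a * c"
proof -
  define x01 x02 where "x01 = cross2 v0 v1" and "x02 = cross2 v0 v2"
  have "(v0 \<bullet> v1) * (v0 \<bullet> v2) < 0"
    using pos neg mult_pos_neg[of "v0 \<bullet> v1" "v0 \<bullet> v2"] by (simp add: inner_commute)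
  then have x: "0 < x01 * x02"
    using inner_via_unit_real2[OF unit, of v1 v2] pos by (simp add: x01_def x02_def)
  \<comment> \<open>all three weights have the sign of \<open>x01\<close>\<close>
  have "0 < x01 * a"
  proof -
    have eq: "cross2 v1 v2 = (v0 \<bullet> v1) * x02 - x01 * (v0 \<bullet> v2)"
      using cross2_via_unit_real2[OF unit, of v1 v2] by (simp add: x01_def x02_def)
    have "x01 * cross2 v1 v2 = (v0 \<bullet> v1) * (x01 * x02) + (x01 * x01) * - (v0 \<bullet> v2)"
      unfolding eq by (simp add: algebra_simps)
    moreover have "0 < (v0 \<bullet> v1) * (x01 * x02)" using pos x by simp
    moreover have "0 < x01 * x01" using x by (metis mult_eq_0_iff not_real_square_gt_zero)
    then have "0 < (x01 * x01) * - (v0 \<bullet> v2)" using neg by (simp add: inner_commute mult_pos_neg)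
    ultimately have "0 < x01 * cross2 v1 v2" by linarith
    then show ?thesis using pos by (simp add: a_def mult.assoc[symmetric])
  qed
  moreover have "0 < x01 * b"
  proof -
    have "x01 * b = (x01 * x02) * - (v2 \<bullet> v0)" by (simp add: b_def x02_def cross2_def algebra_simps)
    then show ?thesis using x neg by (simp add: mult_pos_neg)
  qed
  moreover have "0 < x01 * c"
  proof -
    have "c = x01 * (v0 \<bullet> v1)" by (simp add: c_def x01_def)
    then have "x01 * c = (x01 * x01) * (v0 \<bullet> v1)" by simp
    moreover have "0 < x01 * x01" using x by (metis mult_eq_0_iff not_real_square_gt_zero)
    ultimately show ?thesis using mult_pos_pos pos(1) by metis
  qed
  ultimately show "0 < a * b" "0 < a * c" by (auto simp: zero_less_mult_iff)
qed

lemma zero_in_hull_complex_square_triple: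
  assumes unit: "norm v0 = 1" "norm v1 = 1" "norm v2 = 1"
    and d01: "v0 \<bullet> v1 \<ge> 0" and d12: "v1 \<bullet> v2 \<ge> 0" and d20: "v2 \<bullet> (- v0) \<ge> 0"
  shows "0 \<in> convex hull {complex_square v0, complex_square v1, complex_square v2}"
proof -
  consider "v0 \<bullet> v1 = 0" | "v1 \<bullet> v2 = 0" | "v2 \<bullet> v0 = 0"
    | "v0 \<bullet> v1 > 0" "v1 \<bullet> v2 > 0" "v2 \<bullet> v0 < 0"
    using d01 d12 d20 by fastforce
  then show ?thesis
  proof cases
    case 1
    then show ?thesis using zero_in_hull_complex_square_of_orthogonal[of v0 v1 v2] unit by simp
  next
    case 2
    then show ?thesis using zero_in_hull_complex_square_of_orthogonal[of v1 v2 v0] unit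
      by (simp add: insert_commute)
  next
    case 3
    then show ?thesis using zero_in_hull_complex_square_of_orthogonal[of v2 v0 v1] unit
      by (simp add: insert_commute)
  next
    case 4
    then show ?thesis
      using zero_in_convex_hull_3[OF cyclic_weights_same_sign[OF unit(1) 4]
          complex_square_cyclic_combination] by simp
  qed
qed

text \<open>Here \<open>(a, b)\<close> and \<open>(c, d)\<close> are the coordinates of unit vectors \<open>w1, w3\<close> with respect to
  a unit vector \<open>w2\<close> and its normal, so that \<open>a * c + b * d = w1 \<bullet> w3\<close>.\<close>

lemma acute_pair_middle_ineq:
  fixes a b c d :: real
  assumes a: "a > 0" and c: "c > 0" and ab: "a\<^sup>2 + b\<^sup>2 = 1" and cd: "c\<^sup>2 + d\<^sup>2 = 1"
    and pos: "a * c + b * d > 0" and le_a: "a * c + b * d \<le> a" and le_c: "a * c + b * d \<le> c"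
  shows "(a + c)\<^sup>2 > 1 + (a * c + b * d)"
proof -
  have "b\<^sup>2 = 1 - a\<^sup>2" "d\<^sup>2 = 1 - c\<^sup>2" using ab cd by linarith+
  then have "(b * d)\<^sup>2 = (1 - a\<^sup>2) * (1 - c\<^sup>2)" by (simp add: power_mult_distrib)
  then have bd_sq: "(b * d)\<^sup>2 = (1 - a) * (1 + a) * ((1 - c) * (1 + c))"
    by (simp add: power2_eq_square algebra_simps)
  have factor: "(a + c)\<^sup>2 - 1 - (a * c + b * d) = (a * c - b * d) * (1 + (a * c + b * d))"
    using bd_sq by (simp add: power2_eq_square algebra_simps)
  have "b * d < a * c"
  proof (rule ccontr)
    assume "\<not> b * d < a * c"
    moreover have "0 < a * c" using a c by simp
    ultimately have bd: "0 < b * d" by linarith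
    have h1: "b * d \<le> a * (1 - c)" and h2: "b * d \<le> c * (1 - a)"
      using le_a le_c by (simp_all add: algebra_simps)
    then have "0 < a * (1 - c)" "0 < c * (1 - a)" using bd by linarith+
    then have "0 < 1 - c" "0 < 1 - a" using a c by (simp_all add: zero_less_mult_iff)
    have "(b * d)\<^sup>2 \<le> (a * (1 - c)) * (c * (1 - a))"
      unfolding power2_eq_square by (rule mult_mono[OF h1 h2]) (use bd h1 in auto)
    then have "(1 - a) * (1 - c) * ((1 + a) * (1 + c)) \<le> (1 - a) * (1 - c) * (a * c)"
      unfolding bd_sq by (simp add: algebra_simps)
    then have "(1 + a) * (1 + c) \<le> a * c"
      using \<open>0 < 1 - c\<close> \<open>0 < 1 - a\<close> by (simp add: mult_le_cancel_left_pos)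
    then show False using a c by (simp add: algebra_simps)
  qed
  then have "0 < (a * c - b * d) * (1 + (a * c + b * d))" using pos by simp
  then show ?thesis using factor by simp
qed

lemma inner_complex_square_sum:
  assumes "norm w = 1" "norm w1 = 1" "norm w3 = 1"
  shows "complex_square w \<bullet> complex_square (w1 + w3) = 2 * ((w \<bullet> w1 + w \<bullet> w3)\<^sup>2 - 1 - w1 \<bullet> w3)"
proof -
  have "(norm (w1 + w3))\<^sup>2 = w1 \<bullet> w1 + 2 * (w1 \<bullet> w3) + w3 \<bullet> w3"
    by (simp add: power2_norm_eq_inner inner_add_left inner_add_right inner_commute)
  also have "\<dots> = 2 + 2 * (w1 \<bullet> w3)" using assms by (simp add: dot_square_norm)
  finally show ?thesis using assms(1) by (simp add: inner_complex_square inner_add_right)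
qed

lemma complex_square_open_halfplane_extreme:
  assumes u: "norm w1 = 1" "norm w2 = 1" "norm w3 = 1"
    and pos: "w1 \<bullet> w2 > 0" "w2 \<bullet> w3 > 0" "w1 \<bullet> w3 > 0"
    and min: "w1 \<bullet> w3 \<le> w1 \<bullet> w2" "w1 \<bullet> w3 \<le> w2 \<bullet> w3"
  shows "\<forall>w \<in> {w1, w2, w3}. complex_square w \<bullet> complex_square (w1 + w3) > 0"
proof -
  define a b c d where "a = w2 \<bullet> w1" and "b = cross2 w2 w1" and "c = w2 \<bullet> w3" and "d = cross2 w2 w3"
  have e: "w1 \<bullet> w3 = a * c + b * d"
    unfolding a_def b_def c_def d_def by (rule inner_via_unit_real2[OF u(2)])
  have "w1 \<bullet> w1 = a\<^sup>2 + b\<^sup>2" "w3 \<bullet> w3 = c\<^sup>2 + d\<^sup>2"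
    unfolding a_def b_def c_def d_def power2_eq_square by (rule inner_via_unit_real2[OF u(2)])+
  then have ab: "a\<^sup>2 + b\<^sup>2 = 1" and cd: "c\<^sup>2 + d\<^sup>2 = 1" using u by (simp_all add: dot_square_norm)
  have "a > 0" "c > 0" using pos by (simp_all add: a_def c_def inner_commute)
  then have "(a + c)\<^sup>2 > 1 + (a * c + b * d)"
    using acute_pair_middle_ineq[OF _ _ ab cd] pos min e by (simp add: a_def c_def inner_commute)
  then have "complex_square w2 \<bullet> complex_square (w1 + w3) > 0"
    using e by (simp add: inner_complex_square_sum[OF u(2,1,3)] a_def c_def)
  moreover have "complex_square w1 \<bullet> complex_square (w1 + w3) = 2 * ((w1 \<bullet> w3) * (1 + w1 \<bullet> w3))"
    "complex_square w3 \<bullet> complex_square (w1 + w3) = 2 * ((w1 \<bullet> w3) * (1 + w1 \<bullet> w3))"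
    using inner_complex_square_sum[OF u(1,1,3)] inner_complex_square_sum[OF u(3,1,3)] u
    by (simp_all add: dot_square_norm inner_commute power2_eq_square algebra_simps)
  ultimately show ?thesis using pos(3) by simp
qed

lemma zero_notin_hull_complex_square_acute:
  assumes u: "norm w1 = 1" "norm w2 = 1" "norm w3 = 1"
    and pos: "w1 \<bullet> w2 > 0" "w2 \<bullet> w3 > 0" "w1 \<bullet> w3 > 0"
  shows "0 \<notin> convex hull {complex_square w1, complex_square w2, complex_square w3}"
proof -
  \<comment> \<open>the pair with the smallest inner product plays the role of \<open>w1, w3\<close>\<close>
  obtain z where z: "\<forall>w \<in> {w1, w2, w3}. complex_square w \<bullet> z > 0"
  proof -
    consider "w1 \<bullet> w3 \<le> w1 \<bullet> w2" "w1 \<bullet> w3 \<le> w2 \<bullet> w3"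
      | "w1 \<bullet> w2 \<le> w1 \<bullet> w3" "w1 \<bullet> w2 \<le> w2 \<bullet> w3"
      | "w2 \<bullet> w3 \<le> w1 \<bullet> w2" "w2 \<bullet> w3 \<le> w1 \<bullet> w3" by linarith
    then show ?thesis
    proof cases
      case 1
      then show ?thesis using complex_square_open_halfplane_extreme[OF u pos] that by blast
    next
      case 2
      have "\<forall>w \<in> {w1, w3, w2}. complex_square w \<bullet> complex_square (w1 + w2) > 0"
        by (rule complex_square_open_halfplane_extreme) (use u pos 2 in \<open>simp_all add: inner_commute\<close>)
      then show ?thesis using that by (simp add: insert_commute)
    next
      case 3
      have "\<forall>w \<in> {w2, w1, w3}. complex_square w \<bullet> complex_square (w2 + w3) > 0"
        by (rule complex_square_open_halfplane_extreme) (use u pos 3 in \<open>simp_all add: inner_commute\<close>)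
      then show ?thesis using that by (simp add: insert_commute)
    qed
  qed
  then have "convex hull {complex_square w1, complex_square w2, complex_square w3} \<subseteq> {y. z \<bullet> y > 0}"
    by (intro hull_minimal convex_halfspace_gt) (auto simp: inner_commute)
  then show ?thesis by auto
qed

lemma contact_triple_of_orthogonal:
  "u \<in> contact_points N \<Longrightarrow> w \<in> contact_points N \<Longrightarrow> u \<bullet> w = 0 \<Longrightarrow> contact_triple N"
  unfolding contact_triple_def
  by (rule bexI[of _ u], rule bexI[of _ w], rule bexI[of _ w])
     (auto simp: contact_points_def inner_commute dot_square_norm)

lemma contact_triple_if_zero_in_hull_3:
  assumes N: "is_norm N" and w: "w1 \<in> contact_points N" "w2 \<in> contact_points N" "w3 \<in> contact_points N"
    and hull: "0 \<in> convex hull {complex_square w1, complex_square w2, complex_square w3}"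
  shows "contact_triple N"
proof -
  \<comment> \<open>replacing contact points by their negatives does not change their images\<close>
  define u2 where "u2 = (if w1 \<bullet> w2 < 0 then - w2 else w2)"
  define u3 where "u3 = (if w1 \<bullet> w3 < 0 then - w3 else w3)"
  have u: "u2 \<in> contact_points N" "u3 \<in> contact_points N"
    using w contact_points_uminus[OF N] by (simp_all add: u2_def u3_def)
  have sq: "complex_square u2 = complex_square w2" "complex_square u3 = complex_square w3"
    by (simp_all add: u2_def u3_def)
  have d: "w1 \<bullet> u2 \<ge> 0" "w1 \<bullet> u3 \<ge> 0" by (simp_all add: u2_def u3_def)
  have unit: "norm w1 = 1" "norm u2 = 1" "norm u3 = 1"
    using w u by (simp_all add: contact_points_def)
  consider "w1 \<bullet> u2 = 0" | "w1 \<bullet> u3 = 0" | "u2 \<bullet> u3 \<le> 0"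
    | "w1 \<bullet> u2 > 0" "u2 \<bullet> u3 > 0" "w1 \<bullet> u3 > 0" using d by linarith
  then show ?thesis
  proof cases
    case 1
    then show ?thesis using contact_triple_of_orthogonal w(1) u(1) by blast
  next
    case 2
    then show ?thesis using contact_triple_of_orthogonal w(1) u(2) by blast
  next
    case 3
    then show ?thesis unfolding contact_triple_def using w(1) u d
      by (intro bexI[of _ u2] bexI[of _ w1] bexI[of _ u3]) (auto simp: inner_commute)
  next
    case 4
    then show ?thesis using zero_notin_hull_complex_square_acute[OF unit] hull sq by simp
  qed
qed

lemma nonempty_card_le_3_obtain:
  assumes "finite S" "S \<noteq> {}" "card S \<le> 3"
  obtains a b c where "S = {a, b, c}"
proof -
  have "card S > 0" using assms by (simp add: card_gt_0_iff)
  then have "card S = 1 \<or> card S = 2 \<or> card S = 3" using assms(3) by linarith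
  then show ?thesis
  proof (elim disjE)
    assume "card S = 1"
    then obtain x where "S = {x}" using card_1_singleton_iff by (metis One_nat_def)
    then show ?thesis using that[of x x x] by simp
  next
    assume "card S = 2"
    then obtain x y where "S = {x, y}" using card_2_iff by metis
    then show ?thesis using that[of x y y] by simp
  next
    assume "card S = 3"
    then obtain x y z where "S = {x, y, z}" using card_3_iff by metis
    then show ?thesis using that by blast
  qed
qed

lemma contact_triple_if_zero_in_hull:
  assumes N: "is_norm N" and hull: "0 \<in> convex hull (complex_square ` contact_points N)"
  shows "contact_triple N"
proof -
  obtain S where S: "finite S" "S \<subseteq> complex_square ` contact_points N" "card S \<le> 3"
    "0 \<in> convex hull S"
    using hull unfolding caratheodory[of "complex_square ` contact_points N"] by auto
  have "S \<noteq> {}" using S(4) by auto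
  then obtain a b c where abc: "S = {a, b, c}" by (rule nonempty_card_le_3_obtain[OF S(1) _ S(3)])
  obtain w1 where w1: "w1 \<in> contact_points N" "a = complex_square w1" using S(2) abc by auto
  obtain w2 where w2: "w2 \<in> contact_points N" "b = complex_square w2" using S(2) abc by auto
  obtain w3 where w3: "w3 \<in> contact_points N" "c = complex_square w3" using S(2) abc by auto
  show ?thesis
    using contact_triple_if_zero_in_hull_3[OF N w1(1) w2(1) w3(1)] S(4) abc w1 w2 w3 by simp
qed

section \<open>John ellipses in the coordinate plane\<close>

lemma abs_det_le_1_if_zero_in_hull:
  fixes A :: "real^2^2"
  assumes hull: "0 \<in> convex hull (complex_square ` S)"
    and unit: "\<And>v. v \<in> S \<Longrightarrow> norm v = 1" and bound: "\<And>v. v \<in> S \<Longrightarrow> norm (A *v v) \<le> 1"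
  shows "\<bar>det A\<bar> \<le> 1"
proof -
  define P where "P = (A$1$1)\<^sup>2 + (A$2$1)\<^sup>2"
  define Q where "Q = (A$1$2)\<^sup>2 + (A$2$2)\<^sup>2"
  define R where "R = A$1$1 * A$1$2 + A$2$1 * A$2$2"
  define w :: "real^2" where "w = vector [(P - Q) / 2, R]"
  have quadratic_form: "(norm (A *v u))\<^sup>2 = (P + Q) / 2 * (norm u)\<^sup>2 + w \<bullet> complex_square u" for u
    unfolding norm_real2_sq inner_real2
    by (simp add: matrix_vector_mult_def sum_2 w_def P_def Q_def R_def power2_eq_square field_simps)
  \<comment> \<open>the affine function \<open>(P + Q) / 2 + w \<bullet> y\<close> is at most 1 on \<open>complex_square ` S\<close>, hence at 0\<close>
  have "complex_square ` S \<subseteq> {y. w \<bullet> y \<le> 1 - (P + Q) / 2}"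
  proof clarify
    fix v assume v: "v \<in> S"
    have "(norm (A *v v))\<^sup>2 \<le> 1" using bound[OF v] by (simp add: power_le_one)
    then show "w \<bullet> complex_square v \<le> 1 - (P + Q) / 2"
      using quadratic_form[of v] unit[OF v] by simp
  qed
  then have "convex hull (complex_square ` S) \<subseteq> {y. w \<bullet> y \<le> 1 - (P + Q) / 2}"
    by (intro hull_minimal convex_halfspace_le)
  then have trace: "(P + Q) / 2 \<le> 1" using hull by auto
  have "(det A)\<^sup>2 = P * Q - R\<^sup>2"
    by (simp add: det_2 P_def Q_def R_def power2_eq_square algebra_simps)
  also have "\<dots> \<le> ((P + Q) / 2)\<^sup>2"
  proof -
    have "((P + Q) / 2)\<^sup>2 - (P * Q - R\<^sup>2) = ((P - Q) / 2)\<^sup>2 + R\<^sup>2"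
      by (simp add: power2_eq_square field_simps)
    then show ?thesis using zero_le_power2[of "(P - Q) / 2"] zero_le_power2[of R] by linarith
  qed
  also have "\<dots> \<le> 1\<^sup>2"
    using trace by (intro power_mono) (auto simp: P_def Q_def)
  finally show ?thesis using abs_le_square_iff[of "det A" 1] by simp
qed

lemma norm_contact_vector_matrix_le_1:
  fixes N :: "real^2 \<Rightarrow> real" and f :: "real^2 \<Rightarrow> real^2"
  assumes N: "is_norm N" and le: "\<And>x. N x \<le> norm x" and v: "v \<in> contact_points N"
    and f: "linear f" and sub: "(\<lambda>x. c + f x) ` cball 0 1 \<subseteq> {x. N x \<le> 1}"
  shows "norm (v v* matrix f) \<le> 1"
proof (cases "v v* matrix f = 0")
  case False
  define x where "x = sgn (v v* matrix f)"
  have "norm (v v* matrix f) = (v v* matrix f) \<bullet> x"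
    using False by (simp add: x_def sgn_div_norm inner_commute dot_square_norm power2_eq_square)
  also have "\<dots> = v \<bullet> f x" by (simp add: dot_lmul_matrix matrix_vector_mul(2)[OF f])
  also have "\<dots> \<le> N (f x)" by (rule contact_point_supports[OF N le v])
  also have "\<dots> \<le> 1"
    by (rule inscribed_ellipse_centred[OF N f sub]) (simp add: x_def norm_sgn)
  finally show ?thesis .
qed simp

lemma is_john_ellipse_if_zero_in_hull:
  fixes N :: "real^2 \<Rightarrow> real"
  assumes N: "is_norm N" and le: "\<And>x. N x \<le> norm x"
    and hull: "0 \<in> convex hull (complex_square ` contact_points N)"
  shows "is_john_ellipse {x. N x \<le> 1} (cball 0 1)"
  unfolding is_john_ellipse_cball_iff[OF cball_subset_unit_ball[OF le]]
proof clarify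
  fix F :: "(real^2) set" assume F: "is_ellipse F" "F \<subseteq> {x. N x \<le> 1}"
  then obtain c f where f: "linear f" and Fe: "F = (\<lambda>x. c + f x) ` cball (0::real^2) 1"
    unfolding is_ellipse_def by blast
  have "\<bar>det (transpose (matrix f))\<bar> \<le> 1"
  proof (rule abs_det_le_1_if_zero_in_hull[OF hull])
    fix v assume "v \<in> contact_points N"
    then show "norm (transpose (matrix f) *v v) \<le> 1"
      using norm_contact_vector_matrix_le_1[OF N le _ f] F(2) Fe by simp
  qed (simp add: contact_points_def)
  then show "measure lebesgue F \<le> measure lebesgue (cball (0::real^2) 1)"
    unfolding Fe measure_ellipse[OF f] det_transpose by (simp add: mult_left_le_one_le)
qed

lemma separating_unit_direction:
  fixes P :: "'a::euclidean_space set"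
  assumes "compact P" "0 \<notin> convex hull P"
  obtains z \<kappa> where "norm z = 1" "0 < \<kappa>" "\<And>y. y \<in> P \<Longrightarrow> \<kappa> < y \<bullet> z"
proof -
  obtain a b where ab: "a \<noteq> 0" "0 < b" "\<forall>x \<in> convex hull P. b < a \<bullet> x"
    using separating_hyperplane_closed_0[OF convex_convex_hull
        compact_imp_closed[OF compact_convex_hull[OF assms(1)]] assms(2)] by blast
  show ?thesis
  proof
    show "norm (sgn a) = 1" "0 < b / norm a" using ab by (simp_all add: norm_sgn)
    fix y assume "y \<in> P"
    then have "b < a \<bullet> y" using ab(3) hull_inc[of y P] by blast
    then have "b / norm a < (a \<bullet> y) / norm a" using ab(1) by (simp add: divide_strict_right_mono)
    then show "b / norm a < y \<bullet> sgn a" by (simp add: sgn_div_norm inner_commute divide_inverse_commute)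
  qed
qed

lemma norm_le_outside_contact_sector:
  fixes N :: "real^2 \<Rightarrow> real"
  assumes N: "is_norm N" and le: "\<And>x. N x \<le> norm x"
    and contact: "\<And>v. v \<in> contact_points N \<Longrightarrow> \<kappa> < complex_square v \<bullet> z" and k: "k < \<kappa>"
  obtains m where "0 < m" "m < 1" "\<And>y. complex_square y \<bullet> z \<le> k * (norm y)\<^sup>2 \<Longrightarrow> N y \<le> m * norm y"
proof -
  define K where "K = {w. norm w = 1 \<and> complex_square w \<bullet> z \<le> k}"
  have cont: "continuous_on UNIV N" by (rule continuous_on_is_norm[OF N le])
  have "compact K"
    unfolding compact_eq_bounded_closed K_def Collect_conj_eq
    by (auto simp: bounded_iff intro!: closed_Int closed_Collect_eq closed_Collect_le continuous_intros
        continuous_on_compose2[OF continuous_on_complex_square])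
  have below: "N w < 1" if "w \<in> K" for w
    using that le[of w] contact[of w] k by (force simp: K_def contact_points_def)
  obtain m where m: "0 < m" "m < 1" "\<And>w. w \<in> K \<Longrightarrow> N w \<le> m"
  proof (cases "K = {}")
    case False
    obtain w0 where "w0 \<in> K" "\<forall>w \<in> K. N w \<le> N w0"
      using continuous_attains_sup[OF \<open>compact K\<close> False continuous_on_subset[OF cont]] by blast
    then show ?thesis using that[of "max (N w0) (1/2)"] below by fastforce
  qed (use that[of "1/2"] in simp)
  have "N y \<le> m * norm y" if y: "complex_square y \<bullet> z \<le> k * (norm y)\<^sup>2" for y
  proof (cases "y = 0")
    case False
    have "complex_square (sgn y) \<bullet> z = (complex_square y \<bullet> z) / (norm y)\<^sup>2"
      by (simp add: sgn_div_norm power_divide divide_inverse power_inverse)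
    then have "sgn y \<in> K" using y False by (simp add: K_def norm_sgn divide_le_eq)
    then have "N (sgn y) \<le> m" by (rule m(3))
    then show ?thesis
      using is_norm_scaleR[OF N, of "norm y" "sgn y"] False by (simp add: sgn_div_norm mult.commute)
  qed (use is_norm_eq_0_iff[OF N, of 0] in simp)
  then show ?thesis using that m by blast
qed

lemma exists_linear_stretch:
  fixes z :: "real^2"
  assumes z: "norm z = 1" and A: "0 < A" and M: "0 < M"
  obtains f where "linear f" "det (matrix f) = sqrt (A * M)"
    "\<And>x. (norm (f x))\<^sup>2 = A * (((norm x)\<^sup>2 + complex_square x \<bullet> z) / 2)
        + M * (((norm x)\<^sup>2 - complex_square x \<bullet> z) / 2)"
    "\<And>x. complex_square (f x) \<bullet> z = A * (((norm x)\<^sup>2 + complex_square x \<bullet> z) / 2)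
        - M * (((norm x)\<^sup>2 - complex_square x \<bullet> z) / 2)"
proof -
  \<comment> \<open>\<open>f\<close> stretches by \<open>sqrt A\<close> along the unit vectors whose complex square is \<open>z\<close>
    and by \<open>sqrt M\<close> orthogonally to them\<close>
  define l u where "l = sqrt A" and "u = sqrt M"
  have lu: "l * l = A" "u * u = M" "l * u = sqrt (A * M)"
    using A M by (simp_all add: l_def u_def real_sqrt_mult)
  define p q where "p = (l + u) / 2" and "q = (l - u) / 2"
  have pq: "p\<^sup>2 + q\<^sup>2 = (A + M) / 2" "2 * p * q = (A - M) / 2" "p\<^sup>2 - q\<^sup>2 = sqrt (A * M)"
    unfolding p_def q_def using lu by (simp_all add: power2_eq_square field_simps)
  have zz: "(z$1)\<^sup>2 + (z$2)\<^sup>2 = 1" using z norm_real2_sq[of z] by simp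
  define f :: "real^2 \<Rightarrow> real^2" where
    "f x = vector [(p + q * z$1) * x$1 + q * z$2 * x$2, q * z$2 * x$1 + (p - q * z$1) * x$2]" for x
  have f_nth: "f x $ 1 = (p + q * z$1) * x$1 + q * z$2 * x$2" "f x $ 2 = q * z$2 * x$1 + (p - q * z$1) * x$2"
    for x by (simp_all add: f_def)
  have lin: "linear f"
    by (rule linearI) (simp_all add: vec_eq_iff forall_2 f_nth algebra_simps)
  have sq: "complex_square x \<bullet> z = z$1 * ((x$1)\<^sup>2 - (x$2)\<^sup>2) + z$2 * (2 * x$1 * x$2)" for x
    by (simp add: inner_real2 algebra_simps)
  have "(norm (f x))\<^sup>2 = (p\<^sup>2 + q\<^sup>2 * ((z$1)\<^sup>2 + (z$2)\<^sup>2)) * (norm x)\<^sup>2 + 2 * p * q * (complex_square x \<bullet> z)" for x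
    unfolding norm_real2_sq f_nth sq by (simp add: power2_eq_square algebra_simps)
  then have norm_f: "(norm (f x))\<^sup>2 = (A + M) / 2 * (norm x)\<^sup>2 + (A - M) / 2 * (complex_square x \<bullet> z)" for x
    using pq zz by simp
  have "complex_square (f x) \<bullet> z = (p\<^sup>2 + q\<^sup>2 * ((z$1)\<^sup>2 + (z$2)\<^sup>2)) * (complex_square x \<bullet> z)
      + 2 * p * q * ((z$1)\<^sup>2 + (z$2)\<^sup>2) * (norm x)\<^sup>2" for x
    unfolding norm_real2_sq sq f_nth by (simp add: power2_eq_square algebra_simps)
  then have sq_f: "complex_square (f x) \<bullet> z = (A + M) / 2 * (complex_square x \<bullet> z) + (A - M) / 2 * (norm x)\<^sup>2" for x
    using pq zz by simp
  have "det (matrix f) = p\<^sup>2 - q\<^sup>2 * ((z$1)\<^sup>2 + (z$2)\<^sup>2)"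
    by (simp add: det_2 matrix_def f_nth axis_def power2_eq_square algebra_simps)
  then have "det (matrix f) = sqrt (A * M)" using pq zz by simp
  then show ?thesis
    using that[OF lin] norm_f sq_f by (simp add: field_simps)
qed

lemma stretch_parameters:
  fixes r M :: real
  assumes r: "0 \<le> r" "r \<le> 1" and M: "1 < M"
  obtains A where "0 < A" "A \<le> M" "A * M * (1 + r) = M + r * A" "1 < A * M"
proof
  define D where "D = M * (1 + r) - r"
  define A where "A = M / D"
  have MD: "M \<le> D" using r M mult_right_mono[of 1 M r] by (simp add: D_def algebra_simps)
  then have D: "0 < D" using M by simp
  have AD: "A * D = M" using D by (simp add: A_def)
  show "0 < A" using D M by (simp add: A_def)
  show "A * M * (1 + r) = M + r * A" using AD by (simp add: D_def algebra_simps)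
  have "A \<le> 1" using MD D by (simp add: A_def)
  then show "A \<le> M" using M by simp
  have "0 < (M - 1) * (M - r)" using M r by simp
  then have "D < M * M" by (simp add: D_def algebra_simps)
  then show "1 < A * M" using D by (simp add: A_def field_simps)
qed

lemma weighted_sum_le_1_in_sector:
  fixes s t A M r :: real
  assumes st: "0 \<le> s" "0 \<le> t" "s + t \<le> 1" and r: "0 \<le> r" and A: "0 < A" "A \<le> M"
    and AM: "A * M * (1 + r) = M + r * A" and sector: "M * t \<le> r * A * s"
  shows "A * s + M * t \<le> 1"
proof -
  have pos: "0 < M + r * A" using r A by (simp add: add_pos_nonneg)
  have "(M + r * A) * (A * s + M * t) = (M + r * A) * (s + t) + (M - A) * (M * t - r * A * s)"
  proof -
    have "(M + r * A) * (A * s + M * t) - ((M + r * A) * (s + t) + (M - A) * (M * t - r * A * s))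
        = (s + t) * (A * M * (1 + r) - M - r * A)"
      by (simp add: algebra_simps)
    then show ?thesis using AM by simp
  qed
  also have "(M - A) * (M * t - r * A * s) \<le> 0"
    using A sector by (simp add: mult_nonneg_nonpos)
  also have "(M + r * A) * (s + t) \<le> (M + r * A) * 1"
    using pos st by (intro mult_left_mono) auto
  finally show ?thesis using pos by simp
qed

lemma exists_inscribed_stretch:
  fixes N :: "real^2 \<Rightarrow> real"
  assumes N: "is_norm N" and le: "\<And>x. N x \<le> norm x" and z: "norm z = 1"
    and k: "0 < k" "k < 1" and m: "0 < m" "m < 1"
    and sector: "\<And>y. complex_square y \<bullet> z \<le> k * (norm y)\<^sup>2 \<Longrightarrow> N y \<le> m * norm y"
  obtains f where "linear f" "1 < det (matrix f)" "\<And>x. norm x \<le> 1 \<Longrightarrow> N (f x) \<le> 1"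
proof -
  define r where "r = (1 - k) / (1 + k)"
  have r: "0 \<le> r" "r \<le> 1" using k by (simp_all add: r_def)
  define M where "M = (1 + 1 / m\<^sup>2) / 2"
  have "m\<^sup>2 < 1" using m by (simp add: power_less_one_iff)
  then have M: "1 < M" "m\<^sup>2 * M \<le> 1" using m by (simp_all add: M_def field_simps)
  obtain A where A: "0 < A" "A \<le> M" "A * M * (1 + r) = M + r * A" "1 < A * M"
    using stretch_parameters[OF r M(1)] .
  have "0 < M" using M by simp
  obtain f where f: "linear f" "det (matrix f) = sqrt (A * M)"
    and norm_f: "\<And>x. (norm (f x))\<^sup>2 = A * (((norm x)\<^sup>2 + complex_square x \<bullet> z) / 2)
        + M * (((norm x)\<^sup>2 - complex_square x \<bullet> z) / 2)"
    and sq_f: "\<And>x. complex_square (f x) \<bullet> z = A * (((norm x)\<^sup>2 + complex_square x \<bullet> z) / 2)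
        - M * (((norm x)\<^sup>2 - complex_square x \<bullet> z) / 2)"
    using exists_linear_stretch[OF z A(1) \<open>0 < M\<close>] by blast
  have "N (f x) \<le> 1" if x: "norm x \<le> 1" for x
  proof -
    define s t where "s = ((norm x)\<^sup>2 + complex_square x \<bullet> z) / 2"
      and "t = ((norm x)\<^sup>2 - complex_square x \<bullet> z) / 2"
    have "\<bar>complex_square x \<bullet> z\<bar> \<le> (norm x)\<^sup>2"
      using Cauchy_Schwarz_ineq2[of "complex_square x" z] z by (simp add: norm_complex_square)
    moreover have "s + t = (norm x)\<^sup>2" by (simp add: s_def t_def field_simps)
    moreover have "(norm x)\<^sup>2 \<le> 1" using x by (simp add: power_le_one)
    ultimately have st: "0 \<le> s" "0 \<le> t" "s + t \<le> 1" by (auto simp: s_def t_def abs_le_iff)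
    have ft: "(norm (f x))\<^sup>2 = A * s + M * t" "complex_square (f x) \<bullet> z = A * s - M * t"
      using norm_f[of x] sq_f[of x] by (simp_all add: s_def t_def)
    show ?thesis
    proof (cases "complex_square (f x) \<bullet> z \<le> k * (norm (f x))\<^sup>2")
      case True
      have "(norm (f x))\<^sup>2 \<le> M * s + M * t"
        using ft(1) mult_right_mono[OF A(2) st(1)] by linarith
      also have "\<dots> \<le> M" using st M by (simp add: mult_left_le flip: distrib_left)
      finally have "m\<^sup>2 * (norm (f x))\<^sup>2 \<le> 1"
        using M(2) by (meson mult_left_mono order_trans zero_le_power2)
      moreover have "(N (f x))\<^sup>2 \<le> m\<^sup>2 * (norm (f x))\<^sup>2"
        using sector[OF True] is_norm_nonneg[OF N] by (metis power_mono power_mult_distrib)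
      ultimately have "(N (f x))\<^sup>2 \<le> 1\<^sup>2" by simp
      then show ?thesis by (rule power2_le_imp_le) simp
    next
      case False
      \<comment> \<open>here only \<open>N \<le> norm\<close> is available; \<open>r\<close> turns the sector condition into \<open>M * t \<le> r * A * s\<close>\<close>
      then have "M * t * (1 + k) \<le> A * s * (1 - k)"
        using ft by (simp add: algebra_simps)
      then have "M * t \<le> r * A * s" using k by (simp add: r_def field_simps)
      then have "(norm (f x))\<^sup>2 \<le> 1"
        using weighted_sum_le_1_in_sector[OF st r(1) A(1,2,3)] ft(1) by simp
      then show ?thesis using le[of "f x"] by (simp add: power_le_one_iff)
    qed
  qed
  moreover have "1 < det (matrix f)" using f(2) A(4) by simp
  ultimately show ?thesis using that f(1) by blast
qed

lemma zero_in_hull_if_is_john_ellipse: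
  fixes N :: "real^2 \<Rightarrow> real"
  assumes N: "is_norm N" and le: "\<And>x. N x \<le> norm x"
    and john: "is_john_ellipse {x. N x \<le> 1} (cball 0 1)"
  shows "0 \<in> convex hull (complex_square ` contact_points N)"
proof (rule ccontr)
  assume "0 \<notin> convex hull (complex_square ` contact_points N)"
  moreover have "compact (complex_square ` contact_points N)"
    by (intro compact_continuous_image continuous_on_complex_square compact_contact_points[OF N le])
  ultimately obtain z \<kappa> where z: "norm z = 1" "0 < \<kappa>"
    and contact: "\<And>v. v \<in> contact_points N \<Longrightarrow> \<kappa> < complex_square v \<bullet> z"
    by (metis separating_unit_direction image_eqI)
  define k where "k = min (\<kappa> / 2) (1 / 2)"
  have k: "0 < k" "k < 1" "k < \<kappa>" using z(2) by (auto simp: k_def)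
  obtain m where "0 < m" "m < 1" "\<And>y. complex_square y \<bullet> z \<le> k * (norm y)\<^sup>2 \<Longrightarrow> N y \<le> m * norm y"
    using norm_le_outside_contact_sector[OF N le contact k(3)] by blast
  then obtain f where f: "linear f" "1 < det (matrix f)" and sub: "\<And>x. norm x \<le> 1 \<Longrightarrow> N (f x) \<le> 1"
    using exists_inscribed_stretch[OF N le z(1) k(1,2)] by blast
  have "inj f" using f det_nz_iff_inj[OF f(1)] by simp
  then have "is_ellipse ((\<lambda>x. 0 + f x) ` cball 0 1)" unfolding is_ellipse_def using f(1) by blast
  moreover have "(\<lambda>x. 0 + f x) ` cball 0 1 \<subseteq> {x. N x \<le> 1}" using sub by auto
  ultimately have "measure lebesgue ((\<lambda>x. 0 + f x) ` cball 0 1) \<le> measure lebesgue (cball (0::real^2) 1)"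
    using john unfolding is_john_ellipse_def by blast
  moreover have "measure lebesgue ((\<lambda>x. 0 + f x) ` cball 0 1)
      = \<bar>det (matrix f)\<bar> * measure lebesgue (cball (0::real^2) 1)"
    by (rule measure_ellipse[OF f(1)])
  moreover have "0 < measure lebesgue (cball (0::real^2) 1)"
    using content_cball_pos[of 1 "0::real^2"] by simp
  ultimately show False using f(2) by simp
qed

lemma is_john_ellipse_iff_contact_triple_real2:
  fixes N :: "real^2 \<Rightarrow> real"
  assumes N: "is_norm N" and le: "\<And>x. N x \<le> norm x"
  shows "is_john_ellipse {x. N x \<le> 1} (cball 0 1) \<longleftrightarrow> contact_triple N"
proof
  assume "is_john_ellipse {x. N x \<le> 1} (cball 0 1)"
  then show "contact_triple N"
    by (intro contact_triple_if_zero_in_hull[OF N] zero_in_hull_if_is_john_ellipse[OF N le])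
next
  assume "contact_triple N"
  then obtain v0 v1 v2 where v: "v0 \<in> contact_points N" "v1 \<in> contact_points N" "v2 \<in> contact_points N"
    and d: "v0 \<bullet> v1 \<ge> 0" "v1 \<bullet> v2 \<ge> 0" "v2 \<bullet> (- v0) \<ge> 0"
    unfolding contact_triple_def by blast
  have "0 \<in> convex hull {complex_square v0, complex_square v1, complex_square v2}"
    using zero_in_hull_complex_square_triple[OF _ _ _ d] v by (simp add: contact_points_def)
  also have "\<dots> \<subseteq> convex hull (complex_square ` contact_points N)" using v by (intro hull_mono) auto
  finally show "is_john_ellipse {x. N x \<le> 1} (cball 0 1)"
    by (rule is_john_ellipse_if_zero_in_hull[OF N le])
qed

section \<open>Arbitrary Euclidean planes\<close>

lemma orthonormal_Basis_pair:
  assumes B: "Basis = {b1, b2}" and b12: "b1 \<noteq> b2"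
  shows "b1 \<bullet> b1 = 1" "b2 \<bullet> b2 = 1" "b1 \<bullet> b2 = 0" "b2 \<bullet> b1 = 0"
proof -
  have "b1 \<in> Basis" "b2 \<in> Basis" using B by auto
  then show "b1 \<bullet> b1 = 1" "b2 \<bullet> b2 = 1" "b1 \<bullet> b2 = 0" "b2 \<bullet> b1 = 0"
    using b12 by (simp_all add: inner_Basis)
qed

lemma lborel_distr_coordinates_real2:
  fixes b1 b2 :: "'a::euclidean_space"
  assumes B: "Basis = {b1, b2}" and b12: "b1 \<noteq> b2"
  defines "g \<equiv> \<lambda>x. vector [x \<bullet> b1, x \<bullet> b2] :: real^2"
  shows "distr lborel borel g = lborel"
proof (rule lborel_eqI[symmetric])
  note bb = orthonormal_Basis_pair[OF B b12]
  define h :: "real^2 \<Rightarrow> 'a" where "h y = y$1 *\<^sub>R b1 + y$2 *\<^sub>R b2" for y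
  have "linear g" by (auto intro!: linearI simp: g_def vec_eq_iff forall_2 inner_add_left)
  then have "g \<in> borel_measurable lborel"
    by (simp add: borel_measurable_continuous_onI linear_continuous_on linear_conv_bounded_linear)
  fix l u :: "real^2" assume lu: "\<And>b. b \<in> Basis \<Longrightarrow> l \<bullet> b \<le> u \<bullet> b"
  have "l$1 \<le> u$1" "l$2 \<le> u$2"
    using lu[of "axis 1 1"] lu[of "axis 2 1"] by (auto simp: cart_eq_inner_axis Basis_vec_def)
  have "g -` box l u \<inter> space lborel = box (h l) (h u)"
    by (auto simp: mem_box_cart mem_box B forall_2 g_def h_def inner_add_left bb)
  then have "emeasure (distr lborel borel g) (box l u) = emeasure lborel (box (h l) (h u))"
    using emeasure_distr[OF \<open>g \<in> borel_measurable lborel\<close>, of "box l u"] by simp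
  also have "\<dots> = ennreal ((u$1 - l$1) * (u$2 - l$2))"
    using \<open>l$1 \<le> u$1\<close> \<open>l$2 \<le> u$2\<close> b12
    by (subst emeasure_lborel_box_eq) (auto simp: B h_def inner_add_left inner_diff_left bb)
  also have "(u$1 - l$1) * (u$2 - l$2) = (\<Prod>b\<in>Basis. (u - l) \<bullet> b)"
  proof -
    have basis: "(Basis :: (real^2) set) = {axis 1 1, axis 2 1}"
      by (auto simp: Basis_vec_def) (metis exhaust_2)
    have "axis (1::2) (1::real) \<noteq> axis 2 1" by (simp add: axis_eq_axis)
    then show ?thesis unfolding basis by (simp add: cart_eq_inner_axis[symmetric])
  qed
  finally show "emeasure (distr lborel borel g) (box l u) = (\<Prod>b\<in>Basis. (u - l) \<bullet> b)" .
qed simp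

lemma exists_isometry_real2:
  assumes "DIM('a) = 2"
  obtains g :: "'a::euclidean_space \<Rightarrow> real^2" and h where "linear g" "linear h" "\<And>x. h (g x) = x" "\<And>y. g (h y) = y"
    "\<And>x y. g x \<bullet> g y = x \<bullet> y" "\<And>K. compact K \<Longrightarrow> measure lebesgue (g ` K) = measure lebesgue K"
proof -
  obtain b1 b2 :: 'a where B: "Basis = {b1, b2}" and b12: "b1 \<noteq> b2"
    using assms card_2_iff[of "Basis :: 'a set"] by auto
  note bb = orthonormal_Basis_pair[OF B b12]
  define g :: "'a \<Rightarrow> real^2" where "g x = vector [x \<bullet> b1, x \<bullet> b2]" for x
  define h :: "real^2 \<Rightarrow> 'a" where "h y = y$1 *\<^sub>R b1 + y$2 *\<^sub>R b2" for y
  have lin: "linear g" "linear h"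
    by (auto intro!: linearI simp: g_def h_def vec_eq_iff forall_2 inner_add_left algebra_simps)
  have hg: "h (g x) = x" for x
  proof -
    have "x = (\<Sum>b\<in>Basis. (x \<bullet> b) *\<^sub>R b)" by (simp add: euclidean_representation)
    also have "\<dots> = h (g x)" unfolding B using b12 by (simp add: g_def h_def)
    finally show ?thesis ..
  qed
  have gh: "g (h y) = y" for y
    by (simp add: g_def h_def vec_eq_iff forall_2 inner_add_left bb)
  have inner: "g x \<bullet> g y = x \<bullet> y" for x y
    unfolding euclidean_inner[of x y] B using b12 by (simp add: g_def inner_real2)
  have cont: "continuous_on UNIV g"
    using lin by (simp add: linear_continuous_on linear_conv_bounded_linear)
  then have meas: "g \<in> borel_measurable lborel" by (simp add: borel_measurable_continuous_onI)
  have distr: "distr lborel borel g = lborel"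
    unfolding g_def by (rule lborel_distr_coordinates_real2[OF B b12])
  have "measure lebesgue (g ` K) = measure lebesgue K" if K: "compact K" for K
  proof -
    have "compact (g ` K)" using K cont by (auto intro: compact_continuous_image continuous_on_subset)
    then have "g ` K \<in> sets borel" by (simp add: compact_imp_closed borel_closed)
    then have "measure lebesgue (g ` K) = measure (distr lborel borel g) (g ` K)"
      by (simp add: distr)
    also have "\<dots> = measure lborel (g -` g ` K \<inter> space lborel)"
      by (rule measure_distr[OF meas \<open>g ` K \<in> sets borel\<close>])
    also have "g -` g ` K \<inter> space lborel = K" by (auto simp: image_iff) (metis hg)
    finally show ?thesis using K by (simp add: compact_imp_closed borel_closed)
  qed
  with that lin hg gh inner show ?thesis by blast
qed

lemma contact_triple_isometric_comp:
  fixes h :: "'b::real_inner \<Rightarrow> 'a::real_inner"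
  assumes h: "linear h" and hg: "\<And>x. h (g x) = x" and inner: "\<And>x y. h x \<bullet> h y = x \<bullet> y"
  shows "contact_triple (N \<circ> h) \<longleftrightarrow> contact_triple N"
proof -
  have "norm (h x) = norm x" for x by (simp add: norm_eq_sqrt_inner inner)
  then have contact: "contact_points N = h ` contact_points (N \<circ> h)"
    by (auto simp: contact_points_def image_iff) (metis hg)
  have "h (- x) = - h x" for x by (rule linear_neg[OF h])
  then show ?thesis
    unfolding contact_triple_def contact by (simp add: inner)
qed

theorem theorem2p1:
  fixes N :: "'a::euclidean_space \<Rightarrow> real"
  assumes "DIM('a) = 2"
    and "is_norm N"
    and "\<And>x. N x \<le> norm x"
  shows "is_john_ellipse {x. N x \<le> 1} (cball 0 1) \<longleftrightarrow>
    (\<exists>v0 v1 v2 :: 'a.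
       norm v0 = 1 \<and> N v0 = 1 \<and> norm v1 = 1 \<and> N v1 = 1 \<and>
       norm v2 = 1 \<and> N v2 = 1 \<and>
       v0 \<bullet> v1 \<ge> 0 \<and> v1 \<bullet> v2 \<ge> 0 \<and> v2 \<bullet> (- v0) \<ge> 0)"
proof -
  obtain g :: "'a \<Rightarrow> real^2" and h where g: "linear g" "linear h" "\<And>x. h (g x) = x" "\<And>y. g (h y) = y"
    and inner: "\<And>x y. g x \<bullet> g y = x \<bullet> y"
    and meas: "\<And>K. compact K \<Longrightarrow> measure lebesgue (g ` K) = measure lebesgue K"
    using exists_isometry_real2[OF assms(1)] by blast
  have norm_g: "norm (g x) = norm x" for x by (simp add: norm_eq_sqrt_inner inner)
  have inner_h: "h x \<bullet> h y = x \<bullet> y" for x y using inner[of "h x" "h y"] g(4) by simp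
  have image_g: "g ` S = {y. h y \<in> S}" for S
    using g(3,4) by (auto intro: image_eqI[where x = "h y" for y])
  have "inj h" by (rule injI) (metis g(4))
  then have N: "is_norm (N \<circ> h)" by (rule is_norm_comp_linear[OF assms(2) g(2)])
  have norm_h: "norm (h y) = norm y" for y using norm_g[of "h y"] g(4) by simp
  have le: "(N \<circ> h) y \<le> norm y" for y using assms(3)[of "h y"] norm_h by simp
  have "is_john_ellipse {x. N x \<le> 1} (cball 0 1)
      \<longleftrightarrow> is_john_ellipse (g ` {x. N x \<le> 1}) (g ` cball 0 1)"
    by (rule is_john_ellipse_isometric_image[OF g norm_g meas, symmetric])
  also have "\<dots> \<longleftrightarrow> is_john_ellipse {y. (N \<circ> h) y \<le> 1} (cball 0 1)"
  proof -
    have "g ` cball 0 1 = cball 0 1" using norm_h by (simp add: image_g mem_cball_0 set_eq_iff)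
    then show ?thesis by (simp add: image_g)
  qed
  also have "\<dots> \<longleftrightarrow> contact_triple (N \<circ> h)" by (rule is_john_ellipse_iff_contact_triple_real2[OF N le])
  also have "\<dots> \<longleftrightarrow> contact_triple N" by (rule contact_triple_isometric_comp[OF g(2,3) inner_h])
  finally show ?thesis unfolding contact_triple_def contact_points_def by blast
qed

end
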